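(* Let $V$ be a finite-dimensional complex vector space and $R(z)\in\mathrm{End}(V\otimes V)$, $z\in\mathbb{C}$, a family of operators satisfying $R(u)_{12}R(u+v)_{23}R(v)_{12}=R(v)_{23}R(u+v)_{12}R(u)_{23}$ on $V^{\otimes3}$ for all $u,v\in\mathbb{C}$. If $R(0)=I\otimes I$, then for each $z\in\mathbb{C}$ there is a scalar $c(z)\in\mathbb{C}$ with $R(z)R(-z)=R(-z)R(z)=c(z)\,I\otimes I$. In particular, if $R(z)$ is not an isomorphism, then $R(z)R(-z)=0=R(-z)R(z)$.
   Context: $I$ denotes the identity on $V$; for $A\in\mathrm{End}(V\otimes V)$, $A_{12}=A\otimes I$ and $A_{23}=I\otimes A$ as operators on $V^{\otimes3}$. *)

theory Defs
  imports "HOL-Analysis.Analysis"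
begin

text \<open>V is modelled as complex^'n (a basis is fixed, 'n finite index type);
  V \<otimes> V has basis indexed by 'n \<times> 'n, V^{\<otimes>3} by 'n \<times> 'n \<times> 'n.
  Operators are matrices: (M $ row $ col), composition is matrix product (**).\<close>

type_synonym 'n op2 = "complex ^ ('n \<times> 'n) ^ ('n \<times> 'n)"
type_synonym 'n op3 = "complex ^ ('n \<times> 'n \<times> 'n) ^ ('n \<times> 'n \<times> 'n)"

text \<open>A_12 = A \<otimes> I on V \<otimes> V \<otimes> V.\<close>
definition op12 :: "'n::finite op2 \<Rightarrow> 'n op3" where
  "op12 A = (\<chi> p q. if snd (snd p) = snd (snd q)
                      then A $ (fst p, fst (snd p)) $ (fst q, fst (snd q)) else 0)"

text \<open>A_23 = I \<otimes> A on V \<otimes> V \<otimes> V.\<close>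
definition op23 :: "'n::finite op2 \<Rightarrow> 'n op3" where
  "op23 A = (\<chi> p q. if fst p = fst q then A $ snd p $ snd q else 0)"

end

theory Submission
  imports Defs
begin

text \<open>Putting v = -u in the Yang-Baxter equation and using R(0) = I gives
  (R(u)R(-u))_12 = (R(-u)R(u))_23, and replacing u by -u gives the same with the two
  products exchanged. An operator X with X_12 = Y_23 is the identity on the first factor,
  and by the second equation also on the second one; hence both products are the same
  scalar c(u). If R(u) is singular, then c(u)^d = det R(u) det R(-u) = 0, d = dim (V \<otimes> V).\<close>

lemma sum_UNIV_prod:
  "(\<Sum>p\<in>(UNIV :: ('a::finite \<times> 'b::finite) set). f p) = (\<Sum>x\<in>UNIV. \<Sum>y\<in>UNIV. f (x, y))"
  by (simp add: sum.cartesian_product)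

lemma op12_mult: "op12 A ** op12 B = op12 (A ** B)"
  unfolding op12_def matrix_matrix_mult_def
  by (simp add: vec_eq_iff sum_UNIV_prod)
     (auto simp: if_distrib if_distribR sum.If_cases cong: if_cong)

lemma op23_mult: "op23 A ** op23 B = op23 (A ** B)"
  unfolding op23_def matrix_matrix_mult_def
  by (simp add: vec_eq_iff sum_UNIV_prod)
     (auto simp: if_distrib if_distribR sum.If_cases cong: if_cong)

lemma op12_mat_1: "op12 (mat 1) = mat 1"
  unfolding op12_def mat_def by (auto simp: vec_eq_iff prod_eq_iff)

lemma op23_mat_1: "op23 (mat 1) = mat 1"
  unfolding op23_def mat_def by (auto simp: vec_eq_iff prod_eq_iff)

lemma op12_eq_op23_entry:
  assumes "op12 X = op23 Y"
  shows "X $ (a, b) $ (a', b') = (if a = a' then Y $ (b, c) $ (b', c) else 0)"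
proof -
  have "op12 X $ (a, b, c) $ (a', b', c) = op23 Y $ (a, b, c) $ (a', b', c)"
    using assms by simp
  then show ?thesis
    unfolding op12_def op23_def by simp
qed

lemma op12_eq_op23_swap_imp_scalar:
  fixes X Y :: "'n::finite op2"
  assumes XY: "op12 X = op23 Y" and YX: "op12 Y = op23 X"
  shows "\<exists>c. X = mat c \<and> Y = mat c"
proof -
  fix k :: 'n
  define c where "c = X $ (k, k) $ (k, k)"
  have X: "X $ i $ j = (if i = j then c else 0)" for i j
    using op12_eq_op23_entry[OF XY, of "fst i" "snd i" "fst j" "snd j" k]
      op12_eq_op23_entry[OF YX, of "snd i" k "snd j" k k]
    unfolding c_def by (auto simp: prod_eq_iff)
  have Y: "Y $ i $ j = (if i = j then c else 0)" for i j
    using op12_eq_op23_entry[OF YX, of "fst i" "snd i" "fst j" "snd j" k] X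
    by (auto simp: prod_eq_iff)
  have "X = mat c" "Y = mat c"
    using X Y by (simp_all add: mat_def vec_eq_iff)
  then show ?thesis by blast
qed

lemma det_mat: "det (mat c :: 'a::comm_ring_1^'n^'n) = c ^ CARD('n)"
  by (simp add: det_diagonal mat_def)

lemma mat_eq_0_if_factor_not_invertible:
  fixes A B :: "'a::field^'n^'n"
  assumes "A ** B = mat c" and "\<not> invertible A"
  shows "c = 0"
proof -
  have "c ^ CARD('n) = det A * det B"
    using assms(1) by (metis det_mat det_mul)
  also have "\<dots> = 0"
    using assms(2) by (simp add: invertible_det_nz)
  finally show ?thesis by simp
qed

theorem lemma2p3:
  fixes R :: "complex \<Rightarrow> 'n::finite op2"
  assumes YB: "\<And>u v. op12 (R u) ** op23 (R (u + v)) ** op12 (R v)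
                    = op23 (R v) ** op12 (R (u + v)) ** op23 (R u)"
    and R0: "R 0 = mat 1"
  shows "(\<forall>z. \<exists>c::complex. R z ** R (- z) = mat c \<and> R (- z) ** R z = mat c)
       \<and> (\<forall>z. \<not> invertible (R z) \<longrightarrow> R z ** R (- z) = 0 \<and> R (- z) ** R z = 0)"
proof -
  have unitarity: "op12 (R u ** R (- u)) = op23 (R (- u) ** R u)" for u
    using YB[of u "- u"] by (simp add: R0 op12_mat_1 op23_mat_1 op12_mult op23_mult)
  have scalar: "\<exists>c. R z ** R (- z) = mat c \<and> R (- z) ** R z = mat c" for z
    using op12_eq_op23_swap_imp_scalar[OF unitarity[of z]] unitarity[of "- z"] by simp
  have "R z ** R (- z) = 0 \<and> R (- z) ** R z = 0" if "\<not> invertible (R z)" for z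
    using scalar[of z] mat_eq_0_if_factor_not_invertible that by fastforce
  with scalar show ?thesis by blast
qed

end
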